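(* Let $f$ be a real-valued symmetric ternary tensor in $(\mathbb{C}^3)^{\otimes 3}$, and suppose there exist $\alpha,\beta_1,\beta_2\in\mathbb{C}^3$ with $f=\alpha^{\otimes 3}+\beta_1^{\otimes 3}+\beta_2^{\otimes 3}$ and $\langle\alpha,\beta_i\rangle=\langle\beta_i,\beta_i\rangle=0$ for $i=1,2$. Then there is a $3\times 3$ real orthogonal matrix $T$, $\epsilon\in\{0,1\}$, and $c,\lambda\in\mathbb{R}$ with $c\neq 0$, such that $$c\,T^{\otimes 3}f=\epsilon\big(\beta_0^{\otimes 3}+\overline{\beta_0}^{\otimes 3}\big)+\lambda\, e_3^{\otimes 3},\qquad \beta_0=(1,i,0)^T.$$ Consequently there exist $\alpha\in\mathbb{R}^3$ and $\beta\in\mathbb{C}^3$ such that $f=\alpha^{\otimes 3}+\beta^{\otimes 3}+\overline{\beta}^{\otimes 3}$ with $\langle\alpha,\beta\rangle=\langle\beta,\beta\rangle=0$.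
   Context: Ternary signatures on a 3-element domain are identified with tensors in $(\mathbb{C}^3)^{\otimes 3}$; symmetric means invariant under permutation of the three arguments. For $u,v\in\mathbb{C}^n$, $\langle u,v\rangle=\sum_j u_jv_j$ (bilinear, no conjugation). $\overline{\beta}$ is the entrywise complex conjugate. $e_3=(0,0,1)^T$. For a matrix $T$, $Tf$ denotes $T^{\otimes 3}f$. *)

theory Defs
  imports "HOL-Analysis.Analysis"
begin

type_synonym tensor3 = "3 \<Rightarrow> 3 \<Rightarrow> 3 \<Rightarrow> complex"

definition cube :: "complex^3 \<Rightarrow> tensor3" where
  "cube a = (\<lambda>i j k. a$i * a$j * a$k)"

definition symmetric_tensor :: "tensor3 \<Rightarrow> bool" where
  "symmetric_tensor f \<longleftrightarrow>
     (\<forall>i j k. f i j k = f j i k \<and> f i j k = f i k j \<and> f i j k = f k j i)"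

definition real_valued :: "tensor3 \<Rightarrow> bool" where
  "real_valued f \<longleftrightarrow> (\<forall>i j k. f i j k \<in> \<real>)"

definition bil :: "complex^3 \<Rightarrow> complex^3 \<Rightarrow> complex" where
  "bil u v = (\<Sum>j\<in>UNIV. u$j * v$j)"

definition conjv :: "complex^3 \<Rightarrow> complex^3" where
  "conjv b = (\<chi> j. cnj (b$j))"

definition tmat :: "real^3^3 \<Rightarrow> tensor3 \<Rightarrow> tensor3" where
  "tmat T f = (\<lambda>i j k. \<Sum>p\<in>UNIV. \<Sum>q\<in>UNIV. \<Sum>r\<in>UNIV.
      complex_of_real (T$i$p * T$j$q * T$k$r) * f p q r)"

definition e3 :: "complex^3" where "e3 = vector [0, 0, 1]"
definition beta0 :: "complex^3" where "beta0 = vector [1, \<i>, 0]"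

end

theory Submission
  imports Defs
begin

text \<open>Two isotropic vectors of \<open>\<complex>\<^sup>3\<close> that are orthogonal for the bilinear form are
  parallel. Hence the trace \<open>\<Sum>\<^sub>j f i j j = \<langle>\<alpha>,\<alpha>\<rangle> \<alpha>\<close> of \<open>f\<close> is a real vector, and unless
  \<open>\<alpha>\<close> is isotropic (then \<open>f\<close> is a multiple of \<open>\<alpha>\<^sup>\<otimes>\<^sup>3\<close>, and a real such tensor vanishes),
  \<open>\<alpha>\<^sup>\<otimes>\<^sup>3\<close> is the cube of a real vector. The remainder \<open>\<beta>\<^sub>1\<^sup>\<otimes>\<^sup>3 + \<beta>\<^sub>2\<^sup>\<otimes>\<^sup>3\<close> is then real;
  comparing its contractions with \<open>\<beta>\<^sub>2, \<beta>\<^sub>2\<close> and with their conjugates shows that either it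
  vanishes or \<open>\<beta>\<^sub>2\<^sup>\<otimes>\<^sup>3\<close> is the conjugate of \<open>\<beta>\<^sub>1\<^sup>\<otimes>\<^sup>3\<close>. Finally, writing \<open>\<beta> = P + iQ\<close>,
  isotropy says that \<open>P, Q\<close> are orthogonal of equal length, and orthogonality to the real \<open>\<alpha>\<close>
  puts \<open>\<alpha>\<close> on the line \<open>P \<times> Q\<close>; the rotation with rows \<open>P, Q, P \<times> Q\<close> (normalised) gives
  the normal form.\<close>

section \<open>Tensor functionals\<close>

definition tensor_eval :: "tensor3 \<Rightarrow> complex^3 \<Rightarrow> complex^3 \<Rightarrow> complex^3 \<Rightarrow> complex" where
  "tensor_eval g u v w = (\<Sum>i\<in>UNIV. \<Sum>j\<in>UNIV. \<Sum>k\<in>UNIV. g i j k * u$i * v$j * w$k)"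

definition tensor_contract :: "tensor3 \<Rightarrow> complex^3 \<Rightarrow> complex^3 \<Rightarrow> complex^3" where
  "tensor_contract g u v = (\<chi> k. \<Sum>i\<in>UNIV. \<Sum>j\<in>UNIV. g i j k * u$i * v$j)"

definition tensor_trace :: "tensor3 \<Rightarrow> complex^3" where
  "tensor_trace g = (\<chi> i. \<Sum>j\<in>UNIV. g i j j)"

lemma tensor_eval_cube: "tensor_eval (cube a) u v w = bil a u * bil a v * bil a w"
  unfolding tensor_eval_def cube_def bil_def by (simp add: sum_3 algebra_simps)

lemma tensor_contract_cube: "tensor_contract (cube a) u v = (bil a u * bil a v) *s a"
  unfolding tensor_contract_def cube_def bil_def by (simp add: sum_3 algebra_simps vec_eq_iff)

lemma tensor_trace_cube: "tensor_trace (cube a) = bil a a *s a"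
  unfolding tensor_trace_def cube_def bil_def by (simp add: sum_3 algebra_simps vec_eq_iff)

lemma tensor_eval_add:
  "tensor_eval (\<lambda>i j k. g i j k + h i j k) u v w = tensor_eval g u v w + tensor_eval h u v w"
  unfolding tensor_eval_def by (simp add: sum_3 algebra_simps)

lemma tensor_eval_scale: "tensor_eval (\<lambda>i j k. c * g i j k) u v w = c * tensor_eval g u v w"
  unfolding tensor_eval_def by (simp add: sum_3 algebra_simps)

lemma tensor_contract_add:
  "tensor_contract (\<lambda>i j k. g i j k + h i j k) u v = tensor_contract g u v + tensor_contract h u v"
  unfolding tensor_contract_def by (simp add: sum_3 algebra_simps vec_eq_iff)

lemma tensor_trace_add: "tensor_trace (\<lambda>i j k. g i j k + h i j k) = tensor_trace g + tensor_trace h"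
  unfolding tensor_trace_def by (simp add: sum_3 algebra_simps vec_eq_iff)

lemma cnj_Reals: "z \<in> \<real> \<Longrightarrow> cnj z = z"
  by (metis Reals_cases complex_cnj_complex_of_real)

lemma cnj_tensor_eval:
  "real_valued g \<Longrightarrow> cnj (tensor_eval g u v w) = tensor_eval g (conjv u) (conjv v) (conjv w)"
  unfolding tensor_eval_def conjv_def real_valued_def by (simp add: sum_3 cnj_Reals)

lemma conjv_tensor_contract:
  "real_valued g \<Longrightarrow> conjv (tensor_contract g u v) = tensor_contract g (conjv u) (conjv v)"
  unfolding tensor_contract_def conjv_def real_valued_def by (simp add: sum_3 cnj_Reals vec_eq_iff)

lemma conjv_tensor_trace: "real_valued g \<Longrightarrow> conjv (tensor_trace g) = tensor_trace g"
  unfolding tensor_trace_def conjv_def real_valued_def by (simp add: sum_3 cnj_Reals vec_eq_iff)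

lemma cube_zero [simp]: "cube 0 = (\<lambda>i j k. 0)"
  unfolding cube_def by simp

lemma cube_scale: "cube (t *s u) = (\<lambda>i j k. t^3 * cube u i j k)"
  unfolding cube_def by (simp add: power3_eq_cube algebra_simps)

section \<open>The bilinear form and isotropic vectors\<close>

lemma bil_commute: "bil u v = bil v u"
  unfolding bil_def by (simp add: sum_3 algebra_simps)

lemma bil_scale: "bil (c *s u) v = c * bil u v" "bil u (c *s v) = c * bil u v"
  unfolding bil_def by (simp_all add: sum_3 algebra_simps)

lemma bil_add: "bil (u + w) v = bil u v + bil w v" "bil u (v + w) = bil u v + bil u w"
  unfolding bil_def by (simp_all add: sum_3 algebra_simps)

lemma bil_zero [simp]: "bil 0 v = 0" "bil u 0 = 0"
  unfolding bil_def by simp_all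

lemma cnj_bil: "cnj (bil u v) = bil (conjv u) (conjv v)"
  unfolding bil_def conjv_def by (simp add: sum_3)

lemma conjv_zero [simp]: "conjv 0 = 0"
  unfolding conjv_def by (simp add: vec_eq_iff)

lemma conjv_scale: "conjv (c *s u) = cnj c *s conjv u"
  unfolding conjv_def by (simp add: vec_eq_iff)

lemma bil_conjv_self: "bil v (conjv v) = of_real ((cmod (v$1))^2 + (cmod (v$2))^2 + (cmod (v$3))^2)"
  unfolding bil_def conjv_def of_real_add complex_norm_square by (simp add: sum_3)

lemma bil_conjv_self_eq_0_iff: "bil v (conjv v) = 0 \<longleftrightarrow> v = 0"
proof
  assume "bil v (conjv v) = 0"
  hence "(cmod (v$1))^2 + (cmod (v$2))^2 + (cmod (v$3))^2 = 0"
    by (simp add: bil_conjv_self del: of_real_add)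
  hence "v$1 = 0" "v$2 = 0" "v$3 = 0"
    by (smt (verit) norm_eq_zero power2_less_eq_zero_iff zero_le_power2)+
  thus "v = 0" by (simp add: vec_eq_iff forall_3)
qed simp

text \<open>Lagrange's identity in two variables; the third coordinates enter only through
  the isotropy and orthogonality relations.\<close>
lemma isotropic_orthogonal_minor:
  fixes a b c x y z :: complex
  assumes "a^2 + b^2 + c^2 = 0" "x^2 + y^2 + z^2 = 0" "a*x + b*y + c*z = 0"
  shows "a*y = b*x"
proof -
  have "(a*y - b*x)^2 = (a^2 + b^2) * (x^2 + y^2) - (a*x + b*y)^2" by algebra
  also have "\<dots> = 0"
  proof -
    have "a^2 + b^2 = -(c^2)" "x^2 + y^2 = -(z^2)" "a*x + b*y = -(c*z)"
      using assms by algebra+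
    thus ?thesis by (simp add: power2_eq_square)
  qed
  finally show ?thesis by simp
qed

lemma isotropic_orthogonal_cross:
  assumes "bil u u = 0" "bil v v = 0" "bil u v = 0"
  shows "u$i * v$j = u$j * v$i"
proof -
  have h: "(u$1)^2 + (u$2)^2 + (u$3)^2 = 0" "(v$1)^2 + (v$2)^2 + (v$3)^2 = 0"
      "u$1 * v$1 + u$2 * v$2 + u$3 * v$3 = 0"
    using assms unfolding bil_def by (simp_all add: sum_3 power2_eq_square)
  have "u$1 * v$2 = u$2 * v$1"
    by (rule isotropic_orthogonal_minor[OF h])
  moreover have "u$1 * v$3 = u$3 * v$1"
    by (rule isotropic_orthogonal_minor[where b="u$3" and c="u$2" and y="v$3" and z="v$2"])
      (use h in \<open>simp_all add: algebra_simps\<close>)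
  moreover have "u$2 * v$3 = u$3 * v$2"
    by (rule isotropic_orthogonal_minor[where b="u$3" and c="u$1" and y="v$3" and z="v$1"])
      (use h in \<open>simp_all add: algebra_simps\<close>)
  ultimately show ?thesis using exhaust_3[of i] exhaust_3[of j] by auto
qed

lemma isotropic_orthogonal_parallel:
  assumes "bil u u = 0" "bil v v = 0" "bil u v = 0" "u \<noteq> 0"
  obtains t where "v = t *s u"
proof -
  obtain k where k: "u$k \<noteq> 0" using assms(4) by (metis vec_eq_iff zero_index)
  have "v = (v$k / u$k) *s u"
  proof (subst vec_eq_iff, intro allI)
    fix j
    have "u$k * v$j = u$j * v$k" by (rule isotropic_orthogonal_cross[OF assms(1-3)])
    thus "v$j = ((v$k / u$k) *s u)$j" using k by (simp add: field_simps)
  qed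
  thus thesis using that by blast
qed

section \<open>Real tensors built from isotropic cubes\<close>

text \<open>Evaluating at \<open>conjv u\<close> gives \<open>K |u|^6\<close>, while conjugating the evaluation at \<open>u\<close> gives \<open>0\<close>.\<close>
lemma real_isotropic_cube_eq_0:
  assumes "real_valued g" "g = (\<lambda>i j k. K * cube u i j k)" "bil u u = 0"
  shows "g = (\<lambda>i j k. 0)"
proof -
  have "tensor_eval g (conjv u) (conjv u) (conjv u) = cnj (tensor_eval g u u u)"
    using cnj_tensor_eval[OF assms(1)] by simp
  also have "\<dots> = 0" using assms(2,3) by (simp add: tensor_eval_scale tensor_eval_cube)
  finally have "K * (bil u (conjv u))^3 = 0"
    using assms(2) by (simp add: tensor_eval_scale tensor_eval_cube power3_eq_cube)
  hence "K = 0 \<or> u = 0" using bil_conjv_self_eq_0_iff by auto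
  thus ?thesis using assms(2) by auto
qed

lemma real_isotropic_cubes_orthogonal:
  assumes "real_valued g" "g = (\<lambda>i j k. cube u i j k + cube v i j k)"
    and "bil u u = 0" "bil v v = 0" "bil u v = 0"
  shows "g = (\<lambda>i j k. 0)"
proof (cases "u = 0")
  case True
  then show ?thesis using assms real_isotropic_cube_eq_0[of g 1 v] by simp
next
  case False
  then obtain t where "v = t *s u" using isotropic_orthogonal_parallel assms(3-5) by blast
  hence "g = (\<lambda>i j k. (1 + t^3) * cube u i j k)"
    using assms(2) by (simp add: cube_scale algebra_simps)
  then show ?thesis using real_isotropic_cube_eq_0 assms by blast
qed

text \<open>Contracting twice with \<open>v\<close> and twice with \<open>conjv v\<close>; reality of \<open>g\<close> relates
  the two results, and isotropy of \<open>conjv u\<close> kills the \<open>u\<close>-component of the second.\<close>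
lemma real_isotropic_cubes_conjv_parallel:
  assumes "real_valued g" "g = (\<lambda>i j k. cube u i j k + cube v i j k)"
    and "bil u u = 0" "bil v v = 0" "bil u v \<noteq> 0"
  shows "bil u (conjv v) = 0"
    and "(cnj (bil u v))^2 *s conjv u = (bil v (conjv v))^2 *s v"
proof -
  define s where "s = bil u v"
  define w where "w = bil v (conjv v)"
  define A where "A = (bil u (conjv v))^2"
  have "v \<noteq> 0" using assms(5) by auto
  hence "w \<noteq> 0" by (simp add: w_def bil_conjv_self_eq_0_iff)
  have "tensor_contract g v v = (s^2) *s u"
    using assms(2,4) by (simp add: s_def tensor_contract_add tensor_contract_cube
        power2_eq_square bil_commute[of v u])
  moreover have "tensor_contract g (conjv v) (conjv v) = A *s u + (w^2) *s v"
    using assms(2) by (simp add: tensor_contract_add tensor_contract_cube A_def w_def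
        power2_eq_square bil_commute[of v "conjv v"])
  ultimately have e: "(cnj s)^2 *s conjv u = A *s u + (w^2) *s v"
    using conjv_tensor_contract[OF assms(1), of v v] by (simp add: conjv_scale)
  have "bil ((cnj s)^2 *s conjv u) ((cnj s)^2 *s conjv u) = (cnj s)^4 * cnj (bil u u)"
    by (simp add: bil_scale cnj_bil power4_eq_xxxx power2_eq_square algebra_simps)
  hence "0 = bil (A *s u + (w^2) *s v) (A *s u + (w^2) *s v)" using e assms(3) by simp
  also have "\<dots> = 2 * A * w^2 * s" using assms(3,4)
    by (simp add: s_def bil_add bil_scale algebra_simps bil_commute[of v u])
  finally have "A = 0" using assms(5) \<open>w \<noteq> 0\<close> by (simp add: s_def)
  thus "bil u (conjv v) = 0" by (simp add: A_def)
  show "(cnj s)^2 *s conjv u = w^2 *s v" using e \<open>A = 0\<close> by simp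
qed

lemma real_isotropic_cubes_conjv:
  assumes "real_valued g" "g = (\<lambda>i j k. cube u i j k + cube v i j k)"
    and "bil u u = 0" "bil v v = 0" "bil u v \<noteq> 0"
  shows "cube (conjv u) = cube v"
proof -
  define s where "s = bil u v"
  define w where "w = bil v (conjv v)"
  have "v \<noteq> 0" using assms(5) by auto
  hence "w \<noteq> 0" by (simp add: w_def bil_conjv_self_eq_0_iff)
  have "cnj s \<noteq> 0" using assms(5) by (simp add: s_def)
  note parallel = real_isotropic_cubes_conjv_parallel[OF assms]
  define y where "y = w^2 / (cnj s)^2"
  have conjv_u: "conjv u = y *s v"
  proof -
    have "(1 / (cnj s)^2) *s ((cnj s)^2 *s conjv u) = (1 / (cnj s)^2) *s (w^2 *s v)"
      using parallel(2) by (simp add: s_def w_def)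
    thus ?thesis using \<open>cnj s \<noteq> 0\<close> by (simp add: y_def vector_smult_assoc field_simps)
  qed
  have "cnj (tensor_eval g v v v) = tensor_eval g (conjv v) (conjv v) (conjv v)"
    using cnj_tensor_eval[OF assms(1)] by simp
  hence "(cnj s)^3 = w^3" using assms(2,4) parallel(1)
    by (simp add: s_def w_def tensor_eval_add tensor_eval_cube power3_eq_cube
        bil_commute[of v u] bil_commute[of v "conjv v"])
  moreover have "y^3 = (w^3)^2 / ((cnj s)^3)^2"
    by (simp add: y_def power_divide flip: power_mult)
  ultimately have "y^3 = 1" using \<open>cnj s \<noteq> 0\<close> \<open>w \<noteq> 0\<close> by simp
  thus ?thesis using conjv_u by (simp add: cube_scale)
qed

lemma real_sum_of_isotropic_cubes:
  assumes "real_valued g" "g = (\<lambda>i j k. cube u i j k + cube v i j k)"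
    and "bil u u = 0" "bil v v = 0"
  obtains b where "b = 0 \<or> b = u" "g = (\<lambda>i j k. cube b i j k + cube (conjv b) i j k)"
proof (cases "bil u v = 0")
  case True
  then show ?thesis using that[of 0] real_isotropic_cubes_orthogonal[OF assms] by simp
next
  case False
  then show ?thesis using that[of u] real_isotropic_cubes_conjv[OF assms] assms(2) by simp
qed

section \<open>A real decomposition\<close>

abbreviation of_real_vec :: "real^3 \<Rightarrow> complex^3" where
  "of_real_vec a \<equiv> (\<chi> j. complex_of_real (a$j))"

lemma vec_lambda_0 [simp]: "(\<chi> j. 0) = 0"
  by (simp add: vec_eq_iff)

lemma bil_of_real_vec: "bil (of_real_vec a) (of_real_vec b) = of_real (a \<bullet> b)"
  unfolding bil_def by (simp add: inner_vec_def sum_3)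

lemma real_valued_diff_cube_of_real_vec:
  "real_valued f \<Longrightarrow> real_valued (\<lambda>i j k. f i j k - cube (of_real_vec a) i j k)"
  unfolding real_valued_def cube_def by (simp add: Reals_diff)

lemma conjv_eq_self_iff: "conjv v = v \<longleftrightarrow> v = of_real_vec (\<chi> j. Re (v$j))"
  unfolding conjv_def by (auto simp: vec_eq_iff complex_eq_iff)

text \<open>\<open>(bil \<alpha> \<alpha>)^3\<close> is the positive number \<open>bil v v\<close> for the real vector
  \<open>v = (bil \<alpha> \<alpha>) \<alpha>\<close>, and one divides \<open>v\<close> by its real cube root.\<close>
lemma cube_eq_cube_of_real_vec:
  assumes "bil \<alpha> \<alpha> \<noteq> 0" and real: "conjv (bil \<alpha> \<alpha> *s \<alpha>) = bil \<alpha> \<alpha> *s \<alpha>"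
  obtains a c where "of_real_vec a = c *s \<alpha>" "cube (of_real_vec a) = cube \<alpha>"
proof -
  define k where "k = bil \<alpha> \<alpha>"
  define a0 :: "real^3" where "a0 = (\<chi> j. Re ((k *s \<alpha>)$j))"
  have v: "of_real_vec a0 = k *s \<alpha>" using real by (simp add: a0_def k_def conjv_eq_self_iff)
  have "k^3 = bil (k *s \<alpha>) (k *s \<alpha>)" by (simp add: k_def bil_scale power3_eq_cube)
  also have "\<dots> = of_real (a0 \<bullet> a0)" by (simp flip: v add: bil_of_real_vec)
  finally have k3: "k^3 = of_real (a0 \<bullet> a0)" .
  hence "a0 \<noteq> 0" using assms(1) by (auto simp: k_def)
  define \<rho> where "\<rho> = root 3 (a0 \<bullet> a0)"
  have \<rho>: "\<rho>^3 = a0 \<bullet> a0" "\<rho> > 0" using \<open>a0 \<noteq> 0\<close> by (simp_all add: \<rho>_def)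
  define a where "a = (1/\<rho>) *\<^sub>R a0"
  have a: "of_real_vec a = (of_real (1/\<rho>) * k) *s \<alpha>"
    using v by (simp add: a_def vec_eq_iff)
  moreover have "(of_real (1/\<rho>) * k)^3 = 1"
    using k3 \<rho> \<open>a0 \<noteq> 0\<close> by (simp add: power_mult_distrib power_divide flip: of_real_power)
  ultimately have "cube (of_real_vec a) = cube \<alpha>" by (simp add: cube_scale)
  with a show thesis using that by blast
qed

lemma real_decomposition:
  assumes "real_valued f"
    and f: "f = (\<lambda>i j k. cube \<alpha> i j k + cube \<beta>1 i j k + cube \<beta>2 i j k)"
    and "bil \<alpha> \<beta>1 = 0" "bil \<beta>1 \<beta>1 = 0" "bil \<alpha> \<beta>2 = 0" "bil \<beta>2 \<beta>2 = 0"
  obtains a b where "f = (\<lambda>i j k. cube (of_real_vec a) i j k + cube b i j k + cube (conjv b) i j k)"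
    "bil (of_real_vec a) b = 0" "bil b b = 0"
proof -
  note decomposition = that
  have decomposition_with:
    "thesis" if a: "cube (of_real_vec a) = cube \<alpha>" "bil (of_real_vec a) \<beta>1 = 0" for a
  proof -
    have "real_valued (\<lambda>i j k. cube \<beta>1 i j k + cube \<beta>2 i j k)"
      using real_valued_diff_cube_of_real_vec[OF assms(1), of a] f a(1) by simp
    then obtain b where "b = 0 \<or> b = \<beta>1"
        "(\<lambda>i j k. cube \<beta>1 i j k + cube \<beta>2 i j k) = (\<lambda>i j k. cube b i j k + cube (conjv b) i j k)"
      using real_sum_of_isotropic_cubes[OF _ refl assms(4,6)] by blast
    then show thesis
      using decomposition[of a b] f a assms(4) by (auto simp: fun_eq_iff algebra_simps)
  qed
  consider "\<alpha> = 0" | "\<alpha> \<noteq> 0" "bil \<alpha> \<alpha> = 0" | "bil \<alpha> \<alpha> \<noteq> 0" by blast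
  then show thesis
  proof cases
    case 1
    then show thesis using decomposition_with[of 0] by simp
  next
    case 2
    obtain t1 where "\<beta>1 = t1 *s \<alpha>" using isotropic_orthogonal_parallel 2 assms(3,4) by blast
    moreover obtain t2 where "\<beta>2 = t2 *s \<alpha>" using isotropic_orthogonal_parallel 2 assms(5,6) by blast
    ultimately have "f = (\<lambda>i j k. (1 + t1^3 + t2^3) * cube \<alpha> i j k)"
      using f by (simp add: cube_scale algebra_simps)
    hence "f = (\<lambda>i j k. 0)" using real_isotropic_cube_eq_0 assms(1) 2 by blast
    then show thesis using decomposition[of 0 0] by simp
  next
    case 3
    have "tensor_trace f = bil \<alpha> \<alpha> *s \<alpha>"
      using f assms(4,6) by (simp add: tensor_trace_add tensor_trace_cube)
    then obtain a c where "of_real_vec a = c *s \<alpha>" "cube (of_real_vec a) = cube \<alpha>"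
      using cube_eq_cube_of_real_vec 3 conjv_tensor_trace[OF assms(1)] by metis
    then show thesis using decomposition_with[of a] assms(3) by (simp add: bil_scale)
  qed
qed

section \<open>Orthogonal normal form\<close>

definition rmat_cvec :: "real^3^3 \<Rightarrow> complex^3 \<Rightarrow> complex^3" where
  "rmat_cvec T x = (\<chi> i. \<Sum>p\<in>UNIV. complex_of_real (T$i$p) * x$p)"

lemma tmat_cube: "tmat T (cube x) = cube (rmat_cvec T x)"
  unfolding tmat_def cube_def rmat_cvec_def by (simp add: sum_3 algebra_simps fun_eq_iff)

lemma tmat_add: "tmat T (\<lambda>i j k. f i j k + g i j k) = (\<lambda>i j k. tmat T f i j k + tmat T g i j k)"
  unfolding tmat_def by (simp add: sum_3 algebra_simps fun_eq_iff)

lemma rmat_cvec_of_real_vec: "rmat_cvec T (of_real_vec x) = of_real_vec (T *v x)"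
  unfolding rmat_cvec_def by (simp add: vec_eq_iff matrix_vector_mult_def sum_3)

lemma rmat_cvec_conjv: "rmat_cvec T (conjv x) = conjv (rmat_cvec T x)"
  unfolding rmat_cvec_def conjv_def by (simp add: vec_eq_iff sum_3)

lemma rmat_cvec_add: "rmat_cvec T (x + y) = rmat_cvec T x + rmat_cvec T y"
  unfolding rmat_cvec_def by (simp add: vec_eq_iff sum_3 algebra_simps)

lemma rmat_cvec_scale: "rmat_cvec T (c *s x) = c *s rmat_cvec T x"
  unfolding rmat_cvec_def by (simp add: vec_eq_iff sum_3 algebra_simps)

lemma e3_nth [simp]: "e3$1 = 0" "e3$2 = 0" "e3$3 = 1"
  unfolding e3_def by simp_all

lemma beta0_nth [simp]: "beta0$1 = 1" "beta0$2 = \<i>" "beta0$3 = 0"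
  unfolding beta0_def by simp_all

lemma isotropic_re_im:
  assumes b: "b = of_real_vec P + \<i> *s of_real_vec Q"
    and "bil (of_real_vec a) b = 0" "bil b b = 0"
  shows "norm Q = norm P" "P \<bullet> Q = 0" "a \<bullet> P = 0" "a \<bullet> Q = 0"
proof -
  have "bil b b = of_real (P \<bullet> P - Q \<bullet> Q) + \<i> * of_real (2 * (P \<bullet> Q))"
    unfolding b by (simp add: bil_add bil_scale bil_of_real_vec
        bil_commute[of "of_real_vec Q" "of_real_vec P"] algebra_simps inner_commute)
  hence "P \<bullet> P = Q \<bullet> Q" "P \<bullet> Q = 0" using assms(3) by (simp_all add: complex_eq_iff)
  thus "norm Q = norm P" "P \<bullet> Q = 0" by (simp_all add: norm_eq_sqrt_inner)
  have "bil (of_real_vec a) b = of_real (a \<bullet> P) + \<i> * of_real (a \<bullet> Q)"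
    unfolding b by (simp add: bil_add bil_scale bil_of_real_vec)
  thus "a \<bullet> P = 0" "a \<bullet> Q = 0" using assms(2) by (simp_all add: complex_eq_iff)
qed

lemma orthogonal_matrix_to_axis:
  fixes a :: "real^'n"
  obtains T :: "real^'n^'n" where "orthogonal_matrix T" "T *v a = norm a *\<^sub>R axis k 1"
proof (cases "a = 0")
  case True
  then show ?thesis using that[of "mat 1"] by (simp add: orthogonal_matrix_id)
next
  case False
  then have "norm ((1 / norm a) *\<^sub>R a) = 1" by simp
  then obtain A :: "real^'n^'n" where A: "orthogonal_matrix A" "A *v axis k 1 = (1 / norm a) *\<^sub>R a"
    using orthogonal_matrix_exists_basis by blast
  have "transpose A *v a = transpose A *v (norm a *\<^sub>R (A *v axis k 1))" using A(2) False by simp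
  also have "\<dots> = norm a *\<^sub>R ((transpose A ** A) *v axis k 1)"
    by (simp add: matrix_vector_mult_scaleR matrix_vector_mul_assoc)
  also have "\<dots> = norm a *\<^sub>R axis k 1" using A(1) by (simp add: orthogonal_matrix)
  finally show ?thesis using that[of "transpose A"] A(1) by (simp add: orthogonal_matrix_transpose)
qed

lemma orthogonal_matrix_to_axes:
  fixes P Q a :: "real^3"
  assumes "P \<noteq> 0" "P \<bullet> Q = 0" "norm Q = norm P" "a \<bullet> P = 0" "a \<bullet> Q = 0"
  obtains T :: "real^3^3" and \<mu> where "orthogonal_matrix T"
    "T *v P = norm P *\<^sub>R axis 1 1" "T *v Q = norm P *\<^sub>R axis 2 1" "T *v a = \<mu> *\<^sub>R axis 3 1"
proof -
  define \<rho> where "\<rho> = norm P"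
  have "\<rho> > 0" using assms(1) by (simp add: \<rho>_def)
  define N where "N = cross3 P Q"
  have "(norm N)^2 = (\<rho>^2)^2"
    using norm_cross_dot[of P Q] assms(2,3) by (simp add: \<rho>_def N_def power_mult_distrib power2_eq_square)
  hence nN: "norm N = \<rho>^2" by (rule power2_eq_imp_eq) auto
  have PQ: "P \<bullet> P = \<rho>^2" "Q \<bullet> Q = \<rho>^2" "N \<bullet> N = (\<rho>^2)^2"
    using assms(3) nN by (simp_all add: \<rho>_def flip: power2_norm_eq_inner)
  have NP: "N \<bullet> P = 0" "N \<bullet> Q = 0" "P \<bullet> N = 0" "Q \<bullet> N = 0"
    unfolding N_def using dot_cross_self by (simp_all add: inner_commute)
  define T :: "real^3^3" where "T = vector [(1/\<rho>) *\<^sub>R P, (1/\<rho>) *\<^sub>R Q, (1/\<rho>^2) *\<^sub>R N]"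
  have rows: "row 1 T = (1/\<rho>) *\<^sub>R P" "row 2 T = (1/\<rho>) *\<^sub>R Q" "row 3 T = (1/\<rho>^2) *\<^sub>R N"
    unfolding T_def row_def by (simp_all add: vec_lambda_eta)
  have "orthogonal_matrix T"
    unfolding orthogonal_matrix_orthonormal_rows
  proof (intro conjI allI impI)
    fix i :: 3
    show "norm (row i T) = 1"
      using exhaust_3[of i] rows \<open>\<rho> > 0\<close> assms(3) nN by (auto simp: \<rho>_def)
  next
    fix i j :: 3
    assume "i \<noteq> j"
    then show "orthogonal (row i T) (row j T)"
      using exhaust_3[of i] exhaust_3[of j] rows assms(2) NP
      by (auto simp: orthogonal_def inner_commute)
  qed
  moreover have "T *v P = \<rho> *\<^sub>R axis 1 1" "T *v Q = \<rho> *\<^sub>R axis 2 1"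
      "T *v a = ((N \<bullet> a) / \<rho>^2) *\<^sub>R axis 3 1"
    unfolding T_def using assms(2,4,5) NP PQ \<open>\<rho> > 0\<close>
    by (auto simp: vec_eq_iff forall_3 matrix_vector_mul_component axis_def inner_commute power2_eq_square)
  ultimately show thesis using that by (simp add: \<rho>_def)
qed

lemma tmat_real_decomposition:
  "tmat T (\<lambda>i j k. cube (of_real_vec a) i j k + cube b i j k + cube (conjv b) i j k) =
   (\<lambda>i j k. cube (of_real_vec (T *v a)) i j k + cube (rmat_cvec T b) i j k
            + cube (conjv (rmat_cvec T b)) i j k)"
  by (simp add: tmat_add tmat_cube rmat_cvec_of_real_vec rmat_cvec_conjv)

lemma normal_form:
  assumes f: "f = (\<lambda>i j k. cube (of_real_vec a) i j k + cube b i j k + cube (conjv b) i j k)"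
    and "bil (of_real_vec a) b = 0" "bil b b = 0"
  shows "\<exists>(T::real^3^3) (\<epsilon>::real) (c::real) (lam::real).
            orthogonal_matrix T \<and> \<epsilon> \<in> {0, 1} \<and> c \<noteq> 0 \<and>
            (\<lambda>i j k. complex_of_real c * tmat T f i j k) =
            (\<lambda>i j k. complex_of_real \<epsilon> * (cube beta0 i j k + cube (conjv beta0) i j k)
                     + complex_of_real lam * cube e3 i j k)"
proof -
  define P :: "real^3" where "P = (\<chi> j. Re (b$j))"
  define Q :: "real^3" where "Q = (\<chi> j. Im (b$j))"
  have b: "b = of_real_vec P + \<i> *s of_real_vec Q"
    by (simp add: P_def Q_def vec_eq_iff complex_eq_iff)
  note PQ = isotropic_re_im[OF b assms(2,3)]
  show ?thesis
  proof (cases "P = 0")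
    case True
    hence "b = 0" using PQ b by simp
    obtain T :: "real^3^3" where T: "orthogonal_matrix T" "T *v a = norm a *\<^sub>R axis 3 1"
      using orthogonal_matrix_to_axis by blast
    have "of_real_vec (T *v a) = of_real (norm a) *s e3"
      unfolding T(2) by (simp add: vec_eq_iff forall_3 axis_def)
    hence "(\<lambda>i j k. complex_of_real 1 * tmat T f i j k) =
            (\<lambda>i j k. complex_of_real 0 * (cube beta0 i j k + cube (conjv beta0) i j k)
                     + complex_of_real (norm a ^ 3) * cube e3 i j k)"
      unfolding f tmat_real_decomposition \<open>b = 0\<close> by (simp add: rmat_cvec_def cube_scale)
    thus ?thesis using T(1) by (intro exI[of _ T] exI[of _ 0] exI[of _ 1] exI[of _ "norm a ^ 3"]) simp
  next
    case False
    define \<rho> where "\<rho> = norm P"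
    have "\<rho> > 0" using False by (simp add: \<rho>_def)
    obtain T \<mu> where T: "orthogonal_matrix T" "T *v P = \<rho> *\<^sub>R axis 1 1"
        "T *v Q = \<rho> *\<^sub>R axis 2 1" "T *v a = \<mu> *\<^sub>R axis 3 1"
      using orthogonal_matrix_to_axes[OF False PQ(2,1,3,4)] by (auto simp: \<rho>_def)
    have Tb: "rmat_cvec T b = of_real \<rho> *s beta0"
      unfolding b rmat_cvec_add rmat_cvec_scale rmat_cvec_of_real_vec T(2,3)
      by (simp add: vec_eq_iff forall_3 axis_def)
    have Ta: "of_real_vec (T *v a) = of_real \<mu> *s e3"
      unfolding T(4) by (simp add: vec_eq_iff forall_3 axis_def)
    have "(\<lambda>i j k. complex_of_real (1/\<rho>^3) * tmat T f i j k) =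
            (\<lambda>i j k. complex_of_real 1 * (cube beta0 i j k + cube (conjv beta0) i j k)
                     + complex_of_real (\<mu>^3/\<rho>^3) * cube e3 i j k)"
      unfolding f tmat_real_decomposition Ta Tb using \<open>\<rho> > 0\<close>
      by (simp add: conjv_scale cube_scale fun_eq_iff field_simps)
    thus ?thesis using T(1) \<open>\<rho> > 0\<close>
      by (intro exI[of _ T] exI[of _ 1] exI[of _ "1/\<rho>^3"] exI[of _ "\<mu>^3/\<rho>^3"]) auto
  qed
qed

theorem mainTheorem3:
  fixes f :: tensor3 and \<alpha> \<beta>1 \<beta>2 :: "complex^3"
  assumes "real_valued f" and "symmetric_tensor f"
    and "f = (\<lambda>i j k. cube \<alpha> i j k + cube \<beta>1 i j k + cube \<beta>2 i j k)"
    and "bil \<alpha> \<beta>1 = 0" and "bil \<beta>1 \<beta>1 = 0"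
    and "bil \<alpha> \<beta>2 = 0" and "bil \<beta>2 \<beta>2 = 0"
  shows "(\<exists>(T::real^3^3) (\<epsilon>::real) (c::real) (lam::real).
            orthogonal_matrix T \<and> \<epsilon> \<in> {0, 1} \<and> c \<noteq> 0 \<and>
            (\<lambda>i j k. complex_of_real c * tmat T f i j k) =
            (\<lambda>i j k. complex_of_real \<epsilon> * (cube beta0 i j k + cube (conjv beta0) i j k)
                     + complex_of_real lam * cube e3 i j k))
       \<and> (\<exists>(a::real^3) (b::complex^3).
            f = (\<lambda>i j k. cube (\<chi> j. complex_of_real (a$j)) i j k + cube b i j k
                              + cube (conjv b) i j k) \<and>
            bil (\<chi> j. complex_of_real (a$j)) b = 0 \<and> bil b b = 0)"
proof -
  obtain a b where "f = (\<lambda>i j k. cube (of_real_vec a) i j k + cube b i j k + cube (conjv b) i j k)"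
      "bil (of_real_vec a) b = 0" "bil b b = 0"
    using real_decomposition[OF assms(1,3-7)] .
  then show ?thesis using normal_form by blast
qed

end
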